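(* Let $J=JCK(Z,\delta)$. Relative to the $\mathbb Z_2^2$-grading of $\mathrm{Der}(J)$ induced by that of $J$, $\mathrm{Der}(J)_{\bar1}^{[\bar0,\bar0]}=D(Z,Zx)=\{\tilde\eta_a:a\in Z\}$, $\mathrm{Der}(J)_{\bar1}^{[\bar1,\bar0]}=D(w_1,Zx)$, $\mathrm{Der}(J)_{\bar1}^{[\bar0,\bar1]}=D(w_2,Zx)$, $\mathrm{Der}(J)_{\bar1}^{[\bar1,\bar1]}=D(w_3,Zx)$, and $\mathrm{Der}(J)_{\bar1}$ is the direct sum of these components.
   Context: Let $\mathbb F$ be a field of characteristic $\neq 2$, $Z$ a unital commutative associative $\mathbb F$-algebra, and $\delta$ a derivation of $Z$ such that $Z\delta(Z)=Z$ (the $\mathbb F$-span of all products $f\delta(g)$, $f,g\in Z$, is $Z$). The Cheng-Kac Jordan superalgebra $J=JCK(Z,\delta)=J_{\bar0}\oplus J_{\bar1}$ is defined as follows: $J_{\bar0}=Z1\oplus Zw_1\oplus Zw_2\oplus Zw_3$ and $J_{\bar1}=Zx\oplus Zx_1\oplus Zx_2\oplus Zx_3$ are free $Z$-modules of rank 4; $J_{\bar0}$ is the $Z$-algebra $(\mathbb F1\oplus\mathbb Fw_1\oplus\mathbb Fw_2\oplus\mathbb Fw_3)\otimes_{\mathbb F}Z$ with $1$ the identity, $w_1^2=w_2^2=1$, $w_3^2=-1$, $w_iw_j=0$ for $i\ne j$. For $f,g\in Z$ and $i,j\in\{1,2,3\}$ the remaining products are: $f(gx)=(fg)x$, $f(gx_j)=(fg)x_j$,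 $(fw_i)(gx)=(\delta(f)g)x_i$, $(fw_i)(gx_j)=-(fg)x_{i\times j}$, $(fx)(gx)=\delta(f)g-f\delta(g)$, $(fx)(gx_j)=-(fg)w_j$, $(fx_i)(gx)=(fg)w_i$, $(fx_i)(gx_j)=0$, extended by supercommutativity ($ab=(-1)^{|a||b|}ba$), where $x_{1\times2}=-x_{2\times1}=x_3$, $x_{1\times3}=-x_{3\times1}=x_2$, $x_{3\times2}=-x_{2\times3}=x_1$, $x_{i\times i}=0$. $J$ is $\mathbb Z_2^2$-graded by $J^{[\bar0,\bar0]}=Z\oplus Zx$, $J^{[\bar1,\bar0]}=Zw_1\oplus Zx_1$, $J^{[\bar0,\bar1]}=Zw_2\oplus Zx_2$, $J^{[\bar1,\bar1]}=Zw_3\oplus Zx_3$, and $\mathrm{Der}(J)^{\alpha}$ denotes the derivations mapping each $J^{\beta}$ into $J^{\alpha+\beta}$. Derivations are super derivations (homogeneous $d$ with $d(ab)=d(a)b+(-1)^{|d||a|}ad(b)$); $D(a,b)$ is $c\mapsto a(bc)-(-1)^{|a||b|}b(ac)$; $D(A,B)$ denotes the span of $D(a,b)$, $a\in A,b\in B$. For $a\in Z$, $\tilde\eta_a$ is the odd derivation of $J$ with $\tilde\eta_a(Z)=0$, $\tilde\eta_a(x)=a$, $\tilde\eta_a(x_j)=0$ for $j=1,2,3$. *)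

theory Defs
  imports Main
begin

text \<open>The base field F is a type 'f; the F-algebra structure on the unital commutative
  ring Z (type 'z) is given by a unital ring homomorphism emb : F -> Z, scalar
  multiplication being c.z = emb c * z.  Elements of J are coefficient functions
  on the Z-basis 1, w1, w2, w3, x, x1, x2, x3.\<close>

datatype idx = I1 | I2 | I3

datatype cb = One | W idx | X0 | Xi idx

definition basis :: "cb list" where
  "basis = [One, W I1, W I2, W I3, X0, Xi I1, Xi I2, Xi I3]"

text \<open>x_{i x j} = xsgn i j * x_{xidx i j}\<close>
fun xsgn :: "idx \<Rightarrow> idx \<Rightarrow> 'z::comm_ring_1" where
  "xsgn I1 I2 = 1" | "xsgn I2 I1 = -1"
| "xsgn I1 I3 = 1" | "xsgn I3 I1 = -1"
| "xsgn I3 I2 = 1" | "xsgn I2 I3 = -1"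
| "xsgn _ _ = 0"

fun xidx :: "idx \<Rightarrow> idx \<Rightarrow> idx" where
  "xidx I1 I2 = I3" | "xidx I2 I1 = I3"
| "xidx I1 I3 = I2" | "xidx I3 I1 = I2"
| "xidx I3 I2 = I1" | "xidx I2 I3 = I1"
| "xidx i _ = i"

type_synonym 'z jel = "cb \<Rightarrow> 'z"

definition mon :: "'z::comm_ring_1 \<Rightarrow> cb \<Rightarrow> 'z jel" where
  "mon f e = (\<lambda>c. if c = e then f else 0)"

text \<open>product (f e1)(g e2) of two monomials\<close>
fun bm :: "('z::comm_ring_1 \<Rightarrow> 'z) \<Rightarrow> cb \<Rightarrow> 'z \<Rightarrow> cb \<Rightarrow> 'z \<Rightarrow> 'z jel" where
  "bm \<delta> One f One g = mon (f * g) One"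
| "bm \<delta> One f (W j) g = mon (f * g) (W j)"
| "bm \<delta> One f X0 g = mon (f * g) X0"
| "bm \<delta> One f (Xi j) g = mon (f * g) (Xi j)"
| "bm \<delta> (W i) f One g = mon (f * g) (W i)"
| "bm \<delta> (W i) f (W j) g = (if i = j then mon ((if i = I3 then -1 else 1) * f * g) One else mon 0 One)"
| "bm \<delta> (W i) f X0 g = mon (\<delta> f * g) (Xi i)"
| "bm \<delta> (W i) f (Xi j) g = mon (- (xsgn i j * f * g)) (Xi (xidx i j))"
| "bm \<delta> X0 f One g = mon (f * g) X0"
| "bm \<delta> X0 f (W i) g = mon (\<delta> g * f) (Xi i)"
| "bm \<delta> X0 f X0 g = mon (\<delta> f * g - f * \<delta> g) One"
| "bm \<delta> X0 f (Xi j) g = mon (- (f * g)) (W j)"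
| "bm \<delta> (Xi i) f One g = mon (f * g) (Xi i)"
| "bm \<delta> (Xi i) f (W j) g = mon (- (xsgn j i * f * g)) (Xi (xidx j i))"
| "bm \<delta> (Xi i) f X0 g = mon (f * g) (W i)"
| "bm \<delta> (Xi i) f (Xi j) g = mon 0 One"

definition jmul :: "('z::comm_ring_1 \<Rightarrow> 'z) \<Rightarrow> 'z jel \<Rightarrow> 'z jel \<Rightarrow> 'z jel" where
  "jmul \<delta> a b = (\<lambda>c. sum_list (map (\<lambda>e1. sum_list (map (\<lambda>e2. bm \<delta> e1 (a e1) e2 (b e2) c) basis)) basis))"

definition jadd :: "'z::comm_ring_1 jel \<Rightarrow> 'z jel \<Rightarrow> 'z jel" where
  "jadd a b = (\<lambda>c. a c + b c)"

definition jsub :: "'z::comm_ring_1 jel \<Rightarrow> 'z jel \<Rightarrow> 'z jel" where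
  "jsub a b = (\<lambda>c. a c - b c)"

fun odd_cb :: "cb \<Rightarrow> bool" where
  "odd_cb One = False" | "odd_cb (W i) = False" | "odd_cb X0 = True" | "odd_cb (Xi i) = True"

definition Jpar :: "bool \<Rightarrow> 'z::comm_ring_1 jel set" where
  "Jpar p = {a. \<forall>e. odd_cb e \<noteq> p \<longrightarrow> a e = 0}"

fun deg :: "cb \<Rightarrow> bool \<times> bool" where
  "deg One = (False, False)" | "deg X0 = (False, False)"
| "deg (W I1) = (True, False)" | "deg (Xi I1) = (True, False)"
| "deg (W I2) = (False, True)" | "deg (Xi I2) = (False, True)"
| "deg (W I3) = (True, True)" | "deg (Xi I3) = (True, True)"

definition Jdeg :: "bool \<times> bool \<Rightarrow> 'z::comm_ring_1 jel set" where
  "Jdeg \<alpha> = {a. \<forall>e. deg e \<noteq> \<alpha> \<longrightarrow> a e = 0}"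

definition gadd :: "bool \<times> bool \<Rightarrow> bool \<times> bool \<Rightarrow> bool \<times> bool" where
  "gadd \<alpha> \<beta> = (fst \<alpha> \<noteq> fst \<beta>, snd \<alpha> \<noteq> snd \<beta>)"

definition alg_emb :: "('f::field \<Rightarrow> 'z::comm_ring_1) \<Rightarrow> bool" where
  "alg_emb emb \<longleftrightarrow> emb 1 = 1 \<and> (\<forall>a b. emb (a + b) = emb a + emb b) \<and> (\<forall>a b. emb (a * b) = emb a * emb b)"

definition is_derivation :: "('f::field \<Rightarrow> 'z::comm_ring_1) \<Rightarrow> ('z \<Rightarrow> 'z) \<Rightarrow> bool" where
  "is_derivation emb \<delta> \<longleftrightarrow>
     (\<forall>a b. \<delta> (a + b) = \<delta> a + \<delta> b) \<and> (\<forall>c a. \<delta> (emb c * a) = emb c * \<delta> a) \<and>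
     (\<forall>a b. \<delta> (a * b) = \<delta> a * b + a * \<delta> b)"

text \<open>Z delta(Z) = Z: the F-span of all f * delta g is Z\<close>
definition Z_delta_Z :: "('f::field \<Rightarrow> 'z::comm_ring_1) \<Rightarrow> ('z \<Rightarrow> 'z) \<Rightarrow> bool" where
  "Z_delta_Z emb \<delta> \<longleftrightarrow> (\<forall>z. \<exists>(n::nat) c f g. z = (\<Sum>k<n. emb (c k) * (f k * \<delta> (g k))))"

definition flinear :: "('f::field \<Rightarrow> 'z::comm_ring_1) \<Rightarrow> ('z jel \<Rightarrow> 'z jel) \<Rightarrow> bool" where
  "flinear emb d \<longleftrightarrow> (\<forall>a b. d (jadd a b) = jadd (d a) (d b)) \<and>
                      (\<forall>c a. d (\<lambda>e. emb c * a e) = (\<lambda>e. emb c * d a e))"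

definition odd_der :: "('f::field \<Rightarrow> 'z::comm_ring_1) \<Rightarrow> ('z \<Rightarrow> 'z) \<Rightarrow> ('z jel \<Rightarrow> 'z jel) \<Rightarrow> bool" where
  "odd_der emb \<delta> d \<longleftrightarrow> flinear emb d \<and>
     (\<forall>p. \<forall>a \<in> Jpar p. d a \<in> Jpar (\<not> p)) \<and>
     (\<forall>p q. \<forall>a \<in> Jpar p. \<forall>b \<in> Jpar q.
        d (jmul \<delta> a b) = (if p then jsub (jmul \<delta> (d a) b) (jmul \<delta> a (d b))
                                else jadd (jmul \<delta> (d a) b) (jmul \<delta> a (d b))))"

definition Der1 :: "('f::field \<Rightarrow> 'z::comm_ring_1) \<Rightarrow> ('z \<Rightarrow> 'z) \<Rightarrow> bool \<times> bool \<Rightarrow> ('z jel \<Rightarrow> 'z jel) set" where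
  "Der1 emb \<delta> \<alpha> = {d. odd_der emb \<delta> d \<and> (\<forall>\<beta>. \<forall>a \<in> Jdeg \<beta>. d a \<in> Jdeg (gadd \<alpha> \<beta>))}"

text \<open>D(a,b)(c) = a(bc) - (-1)^{|a||b|} b(ac), for a of parity p and b of parity q\<close>
definition Dop :: "('z::comm_ring_1 \<Rightarrow> 'z) \<Rightarrow> bool \<Rightarrow> bool \<Rightarrow> 'z jel \<Rightarrow> 'z jel \<Rightarrow> 'z jel \<Rightarrow> 'z jel" where
  "Dop \<delta> p q a b = (\<lambda>c. \<lambda>e. jmul \<delta> a (jmul \<delta> b c) e
                          - (if p \<and> q then -1 else 1) * jmul \<delta> b (jmul \<delta> a c) e)"

definition fspan :: "('f::field \<Rightarrow> 'z::comm_ring_1) \<Rightarrow> ('z jel \<Rightarrow> 'z jel) set \<Rightarrow> ('z jel \<Rightarrow> 'z jel) set" where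
  "fspan emb S = {d. \<exists>(n::nat) c s. (\<forall>k<n. s k \<in> S) \<and>
                       d = (\<lambda>a e. \<Sum>k<n. emb (c k) * s k a e)}"

definition eta_tilde :: "('f::field \<Rightarrow> 'z::comm_ring_1) \<Rightarrow> ('z \<Rightarrow> 'z) \<Rightarrow> 'z \<Rightarrow> ('z jel \<Rightarrow> 'z jel)" where
  "eta_tilde emb \<delta> a = (THE d. odd_der emb \<delta> d \<and> (\<forall>f. d (mon f One) = mon 0 One) \<and>
                           d (mon 1 X0) = mon a One \<and> (\<forall>j. d (mon 1 (Xi j)) = mon 0 One))"

end

theory Submission
  imports Defs
begin

(* The proof computes Der(J)_1 explicitly.  Two families of odd derivations are written
   down in coordinates: eta_map a (the derivation eta~_a: c |-> a c_x 1 - sum_i a c_(w_i) x_i)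
   and, for i = 1,2,3, Dw i g, the inner derivation D(w_i, g x).  Each is an odd
   superderivation, homogeneous of degree [0,0] resp. deg w_i.

   Conversely, an odd derivation is determined by its values on Z 1, x and x_1, x_2, x_3,
   because Z x, Z x_i and Z w_i = (Z x_i) x are reached from these by products.  Applying
   the Leibniz rule to the relations 1 1 = 1, x_i x_j = 0 and w_i (g x) = 0, and dividing
   by 2 once, pins down these values; hence every odd derivation is
   eta_map a + Dw 1 g_1 + Dw 2 g_2 + Dw 3 g_3 with a, g_i read off from d(x), d(x_i).

   The theorem follows: each homogeneous component is exactly one family, the F-spans
   of the sets D(Z, Zx) and D(w_i, Zx) are these families (Z-linearity in the parameter
   and Z delta(Z) = Z), eta~_a = eta_map a by uniqueness, and the decomposition of an odd
   derivation is unique since the parameters are recovered from coordinates. *)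

subsection \<open>Coordinates of the product\<close>

lemma cb_cases:
  obtains "e = One" | "e = X0" | "e = W I1" | "e = W I2" | "e = W I3"
    | "e = Xi I1" | "e = Xi I2" | "e = Xi I3"
proof (cases e)
  case (W i) then show ?thesis using that by (cases i) auto
next
  case (Xi i) then show ?thesis using that by (cases i) auto
qed (use that in auto)

lemma all_cb: "(\<forall>e. P e) \<longleftrightarrow> P One \<and> P X0 \<and> P (W I1) \<and> P (W I2) \<and> P (W I3)
    \<and> P (Xi I1) \<and> P (Xi I2) \<and> P (Xi I3)"
  by (metis cb_cases)

lemma jel_eqI:
  assumes "a One = b One" "a X0 = b X0" "a (W I1) = b (W I1)" "a (W I2) = b (W I2)"
    "a (W I3) = b (W I3)" "a (Xi I1) = b (Xi I1)" "a (Xi I2) = b (Xi I2)" "a (Xi I3) = b (Xi I3)"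
  shows "a = b"
proof
  fix e show "a e = b e" by (rule cb_cases[of e]) (simp_all add: assms)
qed

lemma mon_apply: "mon f e c = (if c = e then f else 0)"
  by (simp add: mon_def)

lemma jmul_One: "jmul \<delta> a b One = a One * b One + a (W I1) * b (W I1) + a (W I2) * b (W I2)
    - a (W I3) * b (W I3) + (\<delta> (a X0) * b X0 - a X0 * \<delta> (b X0))"
  by (simp add: jmul_def basis_def mon_def algebra_simps)

lemma jmul_X0: "jmul \<delta> a b X0 = a One * b X0 + a X0 * b One"
  by (simp add: jmul_def basis_def mon_def algebra_simps)

lemma jmul_W1: "jmul \<delta> a b (W I1) = a One * b (W I1) + a (W I1) * b One - a X0 * b (Xi I1) + a (Xi I1) * b X0"
  by (simp add: jmul_def basis_def mon_def algebra_simps)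

lemma jmul_W2: "jmul \<delta> a b (W I2) = a One * b (W I2) + a (W I2) * b One - a X0 * b (Xi I2) + a (Xi I2) * b X0"
  by (simp add: jmul_def basis_def mon_def algebra_simps)

lemma jmul_W3: "jmul \<delta> a b (W I3) = a One * b (W I3) + a (W I3) * b One - a X0 * b (Xi I3) + a (Xi I3) * b X0"
  by (simp add: jmul_def basis_def mon_def algebra_simps)

lemma jmul_X1: "jmul \<delta> a b (Xi I1) = a One * b (Xi I1) + a (Xi I1) * b One + \<delta> (a (W I1)) * b X0
    + \<delta> (b (W I1)) * a X0 - a (W I3) * b (Xi I2) + a (W I2) * b (Xi I3) - a (Xi I2) * b (W I3)
    + a (Xi I3) * b (W I2)"
  by (simp add: jmul_def basis_def mon_def algebra_simps)

lemma jmul_X2: "jmul \<delta> a b (Xi I2) = a One * b (Xi I2) + a (Xi I2) * b One + \<delta> (a (W I2)) * b X0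
    + \<delta> (b (W I2)) * a X0 - a (W I1) * b (Xi I3) + a (W I3) * b (Xi I1) - a (Xi I3) * b (W I1)
    + a (Xi I1) * b (W I3)"
  by (simp add: jmul_def basis_def mon_def algebra_simps)

lemma jmul_X3: "jmul \<delta> a b (Xi I3) = a One * b (Xi I3) + a (Xi I3) * b One + \<delta> (a (W I3)) * b X0
    + \<delta> (b (W I3)) * a X0 - a (W I1) * b (Xi I2) + a (W I2) * b (Xi I1) - a (Xi I2) * b (W I1)
    + a (Xi I1) * b (W I2)"
  by (simp add: jmul_def basis_def mon_def algebra_simps)

lemmas jmul_coords = jmul_One jmul_X0 jmul_W1 jmul_W2 jmul_W3 jmul_X1 jmul_X2 jmul_X3

definition mon_sum :: "'z::comm_ring_1 jel \<Rightarrow> 'z jel" where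
  "mon_sum a = jadd (mon (a One) One) (jadd (mon (a X0) X0) (jadd (mon (a (W I1)) (W I1))
     (jadd (mon (a (W I2)) (W I2)) (jadd (mon (a (W I3)) (W I3)) (jadd (mon (a (Xi I1)) (Xi I1))
     (jadd (mon (a (Xi I2)) (Xi I2)) (mon (a (Xi I3)) (Xi I3))))))))"

lemma mon_sum_eq: "mon_sum a = a"
  unfolding mon_sum_def by (rule jel_eqI) (simp_all add: jadd_def mon_def)

subsection \<open>Parity and degree\<close>

lemma Jpar_vanish: "a \<in> Jpar p \<Longrightarrow> odd_cb e \<noteq> p \<Longrightarrow> a e = 0"
  unfolding Jpar_def by blast

lemma Jpar_True_iff: "a \<in> Jpar True \<longleftrightarrow> a One = 0 \<and> a (W I1) = 0 \<and> a (W I2) = 0 \<and> a (W I3) = 0"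
  unfolding Jpar_def mem_Collect_eq all_cb by simp

lemma Jpar_False_iff: "a \<in> Jpar False \<longleftrightarrow> a X0 = 0 \<and> a (Xi I1) = 0 \<and> a (Xi I2) = 0 \<and> a (Xi I3) = 0"
  unfolding Jpar_def mem_Collect_eq all_cb by simp

lemma Jdeg_iff: "a \<in> Jdeg \<beta> \<longleftrightarrow> (deg One \<noteq> \<beta> \<longrightarrow> a One = 0) \<and> (deg X0 \<noteq> \<beta> \<longrightarrow> a X0 = 0)
  \<and> (deg (W I1) \<noteq> \<beta> \<longrightarrow> a (W I1) = 0) \<and> (deg (W I2) \<noteq> \<beta> \<longrightarrow> a (W I2) = 0)
  \<and> (deg (W I3) \<noteq> \<beta> \<longrightarrow> a (W I3) = 0) \<and> (deg (Xi I1) \<noteq> \<beta> \<longrightarrow> a (Xi I1) = 0)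
  \<and> (deg (Xi I2) \<noteq> \<beta> \<longrightarrow> a (Xi I2) = 0) \<and> (deg (Xi I3) \<noteq> \<beta> \<longrightarrow> a (Xi I3) = 0)"
  unfolding Jdeg_def mem_Collect_eq all_cb ..

lemma mon_Jpar: "mon h e \<in> Jpar (odd_cb e)"
  unfolding Jpar_def mon_def by auto

lemma mon_Jdeg: "mon h e \<in> Jdeg (deg e)"
  unfolding Jdeg_def mon_def by auto

subsection \<open>The two families of odd derivations\<close>

text \<open>eta_map a is the derivation eta~_a: it kills Z and the x_i and sends x to a.\<close>

definition eta_map :: "'z::comm_ring_1 \<Rightarrow> 'z jel \<Rightarrow> 'z jel" where
  "eta_map a c = (\<lambda>e. case e of One \<Rightarrow> a * c X0 | Xi i \<Rightarrow> - (a * c (W i)) | _ \<Rightarrow> 0)"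

text \<open>Dw i g is the inner derivation D(w_i, g x), written out in coordinates.\<close>

fun Dw :: "('z::comm_ring_1 \<Rightarrow> 'z) \<Rightarrow> idx \<Rightarrow> 'z \<Rightarrow> 'z jel \<Rightarrow> 'z jel" where
  "Dw \<delta> I1 g c One = - (g * c (Xi I1))"
| "Dw \<delta> I1 g c X0 = - (g * c (W I1))"
| "Dw \<delta> I1 g c (W I1) = c X0 * \<delta> g - g * \<delta> (c X0)"
| "Dw \<delta> I1 g c (W I2) = - (g * c (Xi I3))"
| "Dw \<delta> I1 g c (W I3) = - (g * c (Xi I2))"
| "Dw \<delta> I1 g c (Xi I1) = - (g * \<delta> (c One))"
| "Dw \<delta> I1 g c (Xi I2) = - (g * \<delta> (c (W I3)))"
| "Dw \<delta> I1 g c (Xi I3) = - (g * \<delta> (c (W I2)))"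
| "Dw \<delta> I2 g c One = - (g * c (Xi I2))"
| "Dw \<delta> I2 g c X0 = - (g * c (W I2))"
| "Dw \<delta> I2 g c (W I2) = c X0 * \<delta> g - g * \<delta> (c X0)"
| "Dw \<delta> I2 g c (W I3) = g * c (Xi I1)"
| "Dw \<delta> I2 g c (W I1) = g * c (Xi I3)"
| "Dw \<delta> I2 g c (Xi I2) = - (g * \<delta> (c One))"
| "Dw \<delta> I2 g c (Xi I3) = g * \<delta> (c (W I1))"
| "Dw \<delta> I2 g c (Xi I1) = g * \<delta> (c (W I3))"
| "Dw \<delta> I3 g c One = g * c (Xi I3)"
| "Dw \<delta> I3 g c X0 = g * c (W I3)"
| "Dw \<delta> I3 g c (W I3) = c X0 * \<delta> g - g * \<delta> (c X0)"
| "Dw \<delta> I3 g c (W I2) = g * c (Xi I1)"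
| "Dw \<delta> I3 g c (W I1) = - (g * c (Xi I2))"
| "Dw \<delta> I3 g c (Xi I3) = - (g * \<delta> (c One))"
| "Dw \<delta> I3 g c (Xi I2) = g * \<delta> (c (W I1))"
| "Dw \<delta> I3 g c (Xi I1) = - (g * \<delta> (c (W I2)))"

lemma eta_map_zero: "eta_map 0 c e = 0"
  by (rule cb_cases[of e]) (simp_all add: eta_map_def)

locale cheng_kac =
  fixes emb :: "'f::field \<Rightarrow> 'z::comm_ring_1" and \<delta> :: "'z \<Rightarrow> 'z"
  assumes emb: "alg_emb emb" and der: "is_derivation emb \<delta>"
begin

lemma delta_add[simp]: "\<delta> (a + b) = \<delta> a + \<delta> b"
  using der by (simp add: is_derivation_def)

lemma delta_mult[simp]: "\<delta> (a * b) = \<delta> a * b + a * \<delta> b"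
  using der by (simp add: is_derivation_def)

lemma delta_emb_mult[simp]: "\<delta> (emb c * a) = emb c * \<delta> a"
  using der by (simp add: is_derivation_def)

lemma delta_zero[simp]: "\<delta> 0 = 0"
  using delta_add[of 0 0] by simp

lemma delta_one[simp]: "\<delta> 1 = 0"
  using delta_mult[of 1 1] by simp

lemma delta_minus[simp]: "\<delta> (- a) = - \<delta> a"
  using delta_add[of a "- a"] by (simp add: eq_neg_iff_add_eq_0 add.commute)

lemma delta_diff[simp]: "\<delta> (a - b) = \<delta> a - \<delta> b"
  using delta_add[of a "- b"] by simp

lemma delta_emb[simp]: "\<delta> (emb c) = 0"
  using delta_emb_mult[of c 1] by simp

lemma delta_sum: "\<delta> (\<Sum>k<(n::nat). emb (c k) * r k) = (\<Sum>k<n. emb (c k) * \<delta> (r k))"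
  by (induction n) simp_all

text \<open>D(w_i, g x) is Z-linear in g up to the term delta(g) c_x in the w_i-coordinate;
  this makes the family closed under F-linear combinations.\<close>

lemma Dw_param: "Dw \<delta> i g c e = g * Dw \<delta> i 1 c e + \<delta> g * (if e = W i then c X0 else 0)"
  by (cases i; rule cb_cases[of e]) (simp_all add: algebra_simps)

lemma Dw_zero: "Dw \<delta> i 0 c e = 0"
  by (cases i; rule cb_cases[of e]) simp_all

lemma jmul_add_left: "jmul \<delta> (\<lambda>e. u e + v e) b = (\<lambda>e. jmul \<delta> u b e + jmul \<delta> v b e)"
  by (rule jel_eqI) (simp_all add: jmul_coords algebra_simps)

lemma jmul_add_right: "jmul \<delta> b (\<lambda>e. u e + v e) = (\<lambda>e. jmul \<delta> b u e + jmul \<delta> b v e)"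
  by (rule jel_eqI) (simp_all add: jmul_coords algebra_simps)

lemma jmul_scalar_left: "jmul \<delta> (mon h One) b = (\<lambda>e. h * b e)"
  by (rule jel_eqI) (simp_all add: jmul_coords mon_def)

lemma jmul_scalar_mon: "jmul \<delta> (mon h One) (mon 1 e) = mon h e"
  unfolding jmul_scalar_left by (auto simp: mon_def)

lemma jmul_scalar_right: "jmul \<delta> b (mon h One) = (\<lambda>e. b e * h)"
  by (rule jel_eqI) (simp_all add: jmul_coords mon_def)

lemma jmul_Xi_X0: "jmul \<delta> (mon h (Xi i)) (mon 1 X0) = mon h (W i)"
  by (cases i; rule jel_eqI) (simp_all add: jmul_coords mon_def)

lemma jmul_Xi_Xi: "jmul \<delta> (mon h (Xi i)) (mon g (Xi j)) = (\<lambda>e. 0)"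
  by (cases i; cases j; rule jel_eqI) (simp_all add: jmul_coords mon_def)

lemma jmul_W_X0: "jmul \<delta> (mon 1 (W i)) (mon g X0) = (\<lambda>e. 0)"
  by (cases i; rule jel_eqI) (simp_all add: jmul_coords mon_def)

lemma double_eq_zero:
  assumes two: "(2::'f) \<noteq> 0" and y: "(y::'z) + y = 0"
  shows "y = 0"
proof -
  have e1: "emb 1 = 1" and ea: "\<And>a b. emb (a + b) = emb a + emb b"
    and em: "\<And>a b. emb (a * b) = emb a * emb b"
    using emb unfolding alg_emb_def by auto
  have "emb 2 = (2::'z)" using ea[of 1 1] e1 by simp
  moreover have "emb (inverse 2) * emb 2 = 1"
    using two by (simp add: em[symmetric] e1)
  ultimately have inv: "emb (inverse 2) * 2 = (1::'z)" by simp
  have "y = emb (inverse 2) * 2 * y" using inv by simp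
  also have "\<dots> = emb (inverse 2) * (y + y)" by (simp only: mult_2 mult.assoc)
  finally show ?thesis using y by simp
qed

lemma odd_derD:
  assumes "odd_der emb \<delta> d"
  shows "d (jadd a b) = jadd (d a) (d b)"
    and "d (\<lambda>e. emb c * a e) = (\<lambda>e. emb c * d a e)"
    and "a \<in> Jpar p \<Longrightarrow> d a \<in> Jpar (\<not> p)"
    and "a \<in> Jpar p \<Longrightarrow> b \<in> Jpar q \<Longrightarrow> d (jmul \<delta> a b) =
      (if p then jsub (jmul \<delta> (d a) b) (jmul \<delta> a (d b)) else jadd (jmul \<delta> (d a) b) (jmul \<delta> a (d b)))"
  using assms unfolding odd_der_def flinear_def by blast+

lemma odd_der_add:
  assumes A: "odd_der emb \<delta> d1" and B: "odd_der emb \<delta> d2"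
  shows "odd_der emb \<delta> (\<lambda>a e. d1 a e + d2 a e)"
  unfolding odd_der_def flinear_def
proof (intro conjI allI ballI)
  fix a b
  show "(\<lambda>e. d1 (jadd a b) e + d2 (jadd a b) e) = jadd (\<lambda>e. d1 a e + d2 a e) (\<lambda>e. d1 b e + d2 b e)"
    by (simp only: odd_derD(1)[OF A] odd_derD(1)[OF B]) (simp add: jadd_def algebra_simps)
next
  fix c a
  show "(\<lambda>e. d1 (\<lambda>e. emb c * a e) e + d2 (\<lambda>e. emb c * a e) e) = (\<lambda>e. emb c * (d1 a e + d2 a e))"
    by (simp only: odd_derD(2)[OF A] odd_derD(2)[OF B]) (simp add: algebra_simps)
next
  fix p and a :: "'z jel"
  assume "a \<in> Jpar p"
  then show "(\<lambda>e. d1 a e + d2 a e) \<in> Jpar (\<not> p)"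
    using odd_derD(3)[OF A] odd_derD(3)[OF B] unfolding Jpar_def by simp
next
  fix p q and a b :: "'z jel"
  assume ab: "a \<in> Jpar p" "b \<in> Jpar q"
  show "(\<lambda>e. d1 (jmul \<delta> a b) e + d2 (jmul \<delta> a b) e) =
       (if p then jsub (jmul \<delta> (\<lambda>e. d1 a e + d2 a e) b) (jmul \<delta> a (\<lambda>e. d1 b e + d2 b e))
        else jadd (jmul \<delta> (\<lambda>e. d1 a e + d2 a e) b) (jmul \<delta> a (\<lambda>e. d1 b e + d2 b e)))"
    by (simp add: odd_derD(4)[OF A ab] odd_derD(4)[OF B ab] jmul_add_left jmul_add_right
        jsub_def jadd_def algebra_simps)
qed

lemma eta_map_odd_der: "odd_der emb \<delta> (eta_map r)"
  unfolding odd_der_def flinear_def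
proof (intro conjI allI ballI)
  fix a b
  show "eta_map r (jadd a b) = jadd (eta_map r a) (eta_map r b)"
    by (rule jel_eqI) (simp_all add: jadd_def eta_map_def algebra_simps)
next
  fix c a
  show "eta_map r (\<lambda>e. emb c * a e) = (\<lambda>e. emb c * eta_map r a e)"
    by (rule jel_eqI) (simp_all add: eta_map_def algebra_simps)
next
  fix p and a :: "'z jel"
  assume "a \<in> Jpar p"
  then show "eta_map r a \<in> Jpar (\<not> p)"
    by (cases p) (simp_all add: Jpar_True_iff Jpar_False_iff eta_map_def)
next
  fix p q and a b :: "'z jel"
  assume ab: "a \<in> Jpar p" "b \<in> Jpar q"
  show "eta_map r (jmul \<delta> a b) = (if p then jsub (jmul \<delta> (eta_map r a) b) (jmul \<delta> a (eta_map r b))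
      else jadd (jmul \<delta> (eta_map r a) b) (jmul \<delta> a (eta_map r b)))"
    by (rule jel_eqI; insert ab; cases p; cases q;
        simp add: Jpar_True_iff Jpar_False_iff jmul_coords jsub_def jadd_def eta_map_def; simp add: algebra_simps)
qed

lemma Dw_odd_der: "odd_der emb \<delta> (Dw \<delta> i g)"
  unfolding odd_der_def flinear_def
proof (intro conjI allI ballI)
  fix a b
  show "Dw \<delta> i g (jadd a b) = jadd (Dw \<delta> i g a) (Dw \<delta> i g b)"
    by (cases i; rule jel_eqI) (simp_all add: jadd_def algebra_simps)
next
  fix c a
  show "Dw \<delta> i g (\<lambda>e. emb c * a e) = (\<lambda>e. emb c * Dw \<delta> i g a e)"
    by (cases i; rule jel_eqI) (simp_all add: algebra_simps)
next
  fix p and a :: "'z jel"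
  assume "a \<in> Jpar p"
  then show "Dw \<delta> i g a \<in> Jpar (\<not> p)"
    by (cases p; cases i) (simp_all add: Jpar_True_iff Jpar_False_iff)
next
  fix p q and a b :: "'z jel"
  assume ab: "a \<in> Jpar p" "b \<in> Jpar q"
  show "Dw \<delta> i g (jmul \<delta> a b) = (if p then jsub (jmul \<delta> (Dw \<delta> i g a) b) (jmul \<delta> a (Dw \<delta> i g b))
      else jadd (jmul \<delta> (Dw \<delta> i g a) b) (jmul \<delta> a (Dw \<delta> i g b)))"
    by (rule jel_eqI; insert ab; cases p; cases q; cases i;
        simp add: Jpar_True_iff Jpar_False_iff jmul_coords jsub_def jadd_def; simp add: algebra_simps)
qed

lemma eta_map_Der1: "eta_map r \<in> Der1 emb \<delta> (False, False)"
  unfolding Der1_def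
proof (intro CollectI conjI allI ballI eta_map_odd_der)
  fix \<beta> and a :: "'z jel"
  assume "a \<in> Jdeg \<beta>"
  then show "eta_map r a \<in> Jdeg (gadd (False, False) \<beta>)"
    by (cases \<beta>) (auto simp: Jdeg_iff eta_map_def gadd_def)
qed

lemma Dw_Der1: "Dw \<delta> i g \<in> Der1 emb \<delta> (deg (W i))"
  unfolding Der1_def
proof (intro CollectI conjI allI ballI Dw_odd_der)
  fix \<beta> and a :: "'z jel"
  assume "a \<in> Jdeg \<beta>"
  then show "Dw \<delta> i g a \<in> Jdeg (gadd (deg (W i)) \<beta>)"
    by (cases \<beta>; cases i) (auto simp: Jdeg_iff gadd_def)
qed

lemma Dop_scalar_x: "Dop \<delta> False True (mon f One) (mon g X0) = eta_map (g * \<delta> f)"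
  by (rule ext, rule jel_eqI) (simp_all add: Dop_def jmul_coords mon_def eta_map_def algebra_simps)

lemma Dop_w_x: "Dop \<delta> False True (mon 1 (W i)) (mon g X0) = Dw \<delta> i g"
  by (rule ext, cases i; rule jel_eqI) (simp_all add: Dop_def jmul_coords mon_def algebra_simps)

text \<open>J is generated by Z 1, x and x_1, x_2, x_3, so these values determine an odd derivation.\<close>

lemma odd_der_eqI:
  assumes A: "odd_der emb \<delta> d1" and B: "odd_der emb \<delta> d2"
    and scalar: "\<And>f. d1 (mon f One) = d2 (mon f One)"
    and x: "d1 (mon 1 X0) = d2 (mon 1 X0)"
    and xi: "\<And>i. d1 (mon 1 (Xi i)) = d2 (mon 1 (Xi i))"
  shows "d1 = d2"
proof
  have X0: "d1 (mon h X0) = d2 (mon h X0)" for h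
    using odd_derD(4)[OF A mon_Jpar mon_Jpar, of h One 1 X0]
      odd_derD(4)[OF B mon_Jpar mon_Jpar, of h One 1 X0] scalar x
    by (simp add: jmul_scalar_mon)
  have Xi: "d1 (mon h (Xi i)) = d2 (mon h (Xi i))" for h i
    using odd_derD(4)[OF A mon_Jpar mon_Jpar, of h One 1 "Xi i"]
      odd_derD(4)[OF B mon_Jpar mon_Jpar, of h One 1 "Xi i"] scalar xi
    by (simp add: jmul_scalar_mon)
  have W: "d1 (mon h (W i)) = d2 (mon h (W i))" for h i
    using odd_derD(4)[OF A mon_Jpar mon_Jpar, of h "Xi i" 1 X0]
      odd_derD(4)[OF B mon_Jpar mon_Jpar, of h "Xi i" 1 X0] Xi x
    by (simp add: jmul_Xi_X0)
  fix a
  have "d1 (mon_sum a) = d2 (mon_sum a)"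
    unfolding mon_sum_def odd_derD(1)[OF A] odd_derD(1)[OF B] by (simp add: scalar X0 Xi W)
  then show "d1 a = d2 a" by (simp only: mon_sum_eq)
qed

end

subsection \<open>Classification of odd derivations\<close>

locale cheng_kac_odd_der = cheng_kac emb \<delta>
  for emb :: "'f::field \<Rightarrow> 'z::comm_ring_1" and \<delta> +
  fixes d :: "'z jel \<Rightarrow> 'z jel"
  assumes odd: "odd_der emb \<delta> d"
begin

text \<open>d reverses parity, so these coordinates of d on monomials vanish.\<close>

lemma d_mon_vanish[simp]:
  "d (mon f One) One = 0" "d (mon f One) (W i) = 0"
  "d (mon f X0) X0 = 0" "d (mon f X0) (Xi i) = 0"
  "d (mon f (Xi j)) X0 = 0" "d (mon f (Xi j)) (Xi i) = 0"
  using Jpar_vanish[OF odd_derD(3)[OF odd mon_Jpar]] by simp_all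

lemma d_null: "d (\<lambda>e. 0) = (\<lambda>e. 0)"
proof -
  have "d (\<lambda>e. 0) = jadd (d (\<lambda>e. 0)) (d (\<lambda>e. 0))"
    using odd_derD(1)[OF odd, of "\<lambda>e. 0" "\<lambda>e. 0"] by (simp add: jadd_def)
  then show ?thesis unfolding jadd_def by (metis (no_types) add_cancel_right_right)
qed

lemma d_mon_X0: "d (mon f X0) = jadd (jmul \<delta> (d (mon f One)) (mon 1 X0)) (jmul \<delta> (mon f One) (d (mon 1 X0)))"
  using odd_derD(4)[OF odd mon_Jpar mon_Jpar, of f One 1 X0] by (simp add: jmul_scalar_mon)

lemma d_mon_Xi: "d (mon f (Xi i)) = jadd (jmul \<delta> (d (mon f One)) (mon 1 (Xi i))) (jmul \<delta> (mon f One) (d (mon 1 (Xi i))))"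
  using odd_derD(4)[OF odd mon_Jpar mon_Jpar, of f One 1 "Xi i"] by (simp add: jmul_scalar_mon)

lemma d_mon_W: "d (mon f (W i)) = jsub (jmul \<delta> (d (mon f (Xi i))) (mon 1 X0)) (jmul \<delta> (mon f (Xi i)) (d (mon 1 X0)))"
  using odd_derD(4)[OF odd mon_Jpar mon_Jpar, of f "Xi i" 1 X0] by (simp add: jmul_Xi_X0)

text \<open>From 1 1 = 1: d(1) = 2 d(1) coordinatewise, hence d(1) = 0.\<close>

lemma d_unit: "d (mon 1 One) e = 0"
proof -
  have "jmul \<delta> (mon 1 One) (mon (1::'z) One) = mon 1 One"
    by (rule jmul_scalar_mon)
  then have "d (mon 1 One) = jadd (jmul \<delta> (d (mon 1 One)) (mon 1 One)) (jmul \<delta> (mon 1 One) (d (mon 1 One)))"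
    using odd_derD(4)[OF odd mon_Jpar mon_Jpar, of 1 One 1 One] by simp
  then have "d (mon 1 One) e = d (mon 1 One) e + d (mon 1 One) e"
    by (subst (asm) fun_eq_iff) (simp add: jadd_def jmul_scalar_left jmul_scalar_right)
  then show ?thesis by simp
qed

lemma d_Xi_Xi: "jsub (jmul \<delta> (d (mon f (Xi i))) (mon 1 (Xi j))) (jmul \<delta> (mon f (Xi i)) (d (mon 1 (Xi j)))) = (\<lambda>e. 0)"
  using odd_derD(4)[OF odd mon_Jpar mon_Jpar, of f "Xi i" 1 "Xi j"] by (simp add: jmul_Xi_Xi d_null)

lemma d_W_X0: "jadd (jmul \<delta> (d (mon 1 (W i))) (mon g X0)) (jmul \<delta> (mon 1 (W i)) (d (mon g X0))) = (\<lambda>e. 0)"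
  using odd_derD(4)[OF odd mon_Jpar mon_Jpar, of 1 "W i" g X0] by (simp add: jmul_W_X0 d_null)

text \<open>The x-coordinate of d(f 1) and the w_i-coordinate of d(x_i) vanish (needs char F /= 2):
  the three relations x_i x_j = 0 give y_i + y_j = d(1)_x = 0 for all i /= j.\<close>

lemma d_scalar_X0_and_Xi_W:
  assumes two: "(2::'f) \<noteq> 0"
  shows "d (mon f One) X0 = 0" and "d (mon 1 (Xi i)) (W i) = 0"
proof -
  have rel: "d (mon f One) X0 = f * (d (mon 1 (Xi i)) (W i) + d (mon 1 (Xi j)) (W j))"
    if "i \<noteq> j" for f i j
    using that fun_cong[OF d_Xi_Xi[of f i j], of "Xi (xidx i j)"]
    by (cases i; cases j) (simp_all add: d_mon_Xi[of f] jmul_coords jsub_def jadd_def mon_apply algebra_simps)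
  let ?y = "\<lambda>i. d (mon 1 (Xi i)) (W i)"
  have s12: "?y I1 + ?y I2 = 0" and s23: "?y I2 + ?y I3 = 0" and s13: "?y I1 + ?y I3 = 0"
    using rel[where f=1 and i=I1 and j=I2] rel[where f=1 and i=I2 and j=I3]
      rel[where f=1 and i=I1 and j=I3] d_unit by simp_all
  have "?y I1 + ?y I1 = 0"
    using s12 s23 s13 by (simp add: algebra_simps eq_neg_iff_add_eq_0[symmetric] add_eq_0_iff2)
  then have y1: "?y I1 = 0" by (rule double_eq_zero[OF two])
  with s12 s13 have y: "?y i = 0" for i by (cases i) simp_all
  show "?y i = 0" by (rule y)
  show "d (mon f One) X0 = 0" using rel[where f=f and i=I1 and j=I2] y by simp
qed

text \<open>From w_i (g x) = 0: d(x) and d(g 1) are governed by the constants t_i = d(x_i)_1.\<close>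

lemma d_x_W_and_scalar_Xi:
  "d (mon 1 X0) (W I1) = - \<delta> (d (mon 1 (Xi I1)) One)"
  "d (mon 1 X0) (W I2) = - \<delta> (d (mon 1 (Xi I2)) One)"
  "d (mon 1 X0) (W I3) = \<delta> (d (mon 1 (Xi I3)) One)"
  "d (mon f One) (Xi I1) = d (mon 1 (Xi I1)) One * \<delta> f"
  "d (mon f One) (Xi I2) = d (mon 1 (Xi I2)) One * \<delta> f"
  "d (mon f One) (Xi I3) = - (d (mon 1 (Xi I3)) One * \<delta> f)"
proof -
  have rel: "\<delta> (d (mon 1 (Xi i)) One) * g - d (mon 1 (Xi i)) One * \<delta> g
      + (if i = I3 then -1 else 1) * (d (mon g One) (Xi i) + g * d (mon 1 X0) (W i)) = 0" for g i
    using fun_cong[OF d_W_X0[of i g], of One]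
    by (cases i) (simp_all add: d_mon_W[of 1] d_mon_X0[of g] jmul_coords jsub_def jadd_def mon_apply algebra_simps)
  have x: "d (mon 1 X0) (W i) = (if i = I3 then 1 else -1) * \<delta> (d (mon 1 (Xi i)) One)" for i
    using rel[where g=1 and i=i] d_unit by (cases i) (simp_all add: algebra_simps eq_neg_iff_add_eq_0)
  have s: "d (mon f One) (Xi i) = (if i = I3 then -1 else 1) * (d (mon 1 (Xi i)) One * \<delta> f)" for i
    using rel[where g=f and i=i] by (cases i) (simp_all add: x algebra_simps eq_neg_iff_add_eq_0 neg_eq_iff_add_eq_0)
  show "d (mon 1 X0) (W I1) = - \<delta> (d (mon 1 (Xi I1)) One)" "d (mon 1 X0) (W I2) = - \<delta> (d (mon 1 (Xi I2)) One)"
    "d (mon 1 X0) (W I3) = \<delta> (d (mon 1 (Xi I3)) One)"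
    using x[of I1] x[of I2] x[of I3] by simp_all
  show "d (mon f One) (Xi I1) = d (mon 1 (Xi I1)) One * \<delta> f" "d (mon f One) (Xi I2) = d (mon 1 (Xi I2)) One * \<delta> f"
    "d (mon f One) (Xi I3) = - (d (mon 1 (Xi I3)) One * \<delta> f)"
    using s[of I1] s[of I2] s[of I3] by simp_all
qed

text \<open>From x_i x_j = 0 (i /= j): the off-diagonal w-coordinates of d(x_i) are the constants t_k.\<close>

lemma d_Xi_W_cross:
  "d (mon 1 (Xi I1)) (W I2) = d (mon 1 (Xi I3)) One" "d (mon 1 (Xi I1)) (W I3) = - d (mon 1 (Xi I2)) One"
  "d (mon 1 (Xi I2)) (W I1) = - d (mon 1 (Xi I3)) One" "d (mon 1 (Xi I2)) (W I3) = d (mon 1 (Xi I1)) One"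
  "d (mon 1 (Xi I3)) (W I1) = - d (mon 1 (Xi I2)) One" "d (mon 1 (Xi I3)) (W I2) = d (mon 1 (Xi I1)) One"
  using fun_cong[OF d_Xi_Xi[of 1 I3 I1], of "Xi I1"] fun_cong[OF d_Xi_Xi[of 1 I2 I1], of "Xi I1"]
    fun_cong[OF d_Xi_Xi[of 1 I3 I2], of "Xi I2"] fun_cong[OF d_Xi_Xi[of 1 I1 I2], of "Xi I2"]
    fun_cong[OF d_Xi_Xi[of 1 I2 I3], of "Xi I3"] fun_cong[OF d_Xi_Xi[of 1 I1 I3], of "Xi I3"]
  by (simp_all add: jmul_coords jsub_def jadd_def mon_apply algebra_simps eq_neg_iff_add_eq_0)

theorem odd_der_decomposition:
  assumes two: "(2::'f) \<noteq> 0"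
  shows "d = (\<lambda>c e. eta_map (d (mon 1 X0) One) c e + Dw \<delta> I1 (- d (mon 1 (Xi I1)) One) c e
      + Dw \<delta> I2 (- d (mon 1 (Xi I2)) One) c e + Dw \<delta> I3 (d (mon 1 (Xi I3)) One) c e)"
    (is "d = ?E")
proof (rule odd_der_eqI[OF odd])
  note facts = d_scalar_X0_and_Xi_W[OF two] d_x_W_and_scalar_Xi d_Xi_W_cross d_unit
  show "odd_der emb \<delta> ?E"
    by (intro odd_der_add eta_map_odd_der Dw_odd_der)
  show "d (mon f One) = ?E (mon f One)" for f
    by (rule jel_eqI) (simp_all add: eta_map_def mon_apply facts)
  show "d (mon 1 X0) = ?E (mon 1 X0)"
    by (rule jel_eqI) (simp_all add: eta_map_def mon_apply facts)
  show "d (mon 1 (Xi i)) = ?E (mon 1 (Xi i))" for i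
    by (cases i; rule jel_eqI) (simp_all add: eta_map_def mon_apply facts)
qed

end

subsection \<open>The homogeneous components and their descriptions\<close>

context cheng_kac
begin

lemma Der1_vanish:
  assumes "d \<in> Der1 emb \<delta> \<alpha>" "deg One \<noteq> gadd \<alpha> (deg e)"
  shows "d (mon 1 e) One = 0"
proof -
  have "d (mon 1 e) \<in> Jdeg (gadd \<alpha> (deg e))"
    using assms(1) mon_Jdeg[of 1 e] unfolding Der1_def by blast
  then show ?thesis using assms(2) unfolding Jdeg_def by blast
qed

text \<open>Each homogeneous component of Der(J)_1 is a single family: the other summands of the
  decomposition have parameters forced to 0 by homogeneity.\<close>

lemma Der1_zero_component:
  assumes two: "(2::'f) \<noteq> 0"
  shows "Der1 emb \<delta> (False, False) = range eta_map"
proof (intro subset_antisym subsetI)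
  fix d assume d: "d \<in> Der1 emb \<delta> (False, False)"
  then interpret cheng_kac_odd_der emb \<delta> d by unfold_locales (simp add: Der1_def)
  have "d (mon 1 (Xi i)) One = 0" for i
    using Der1_vanish[OF d] by (cases i) (simp_all add: gadd_def)
  then have "d = eta_map (d (mon 1 X0) One)"
    by (subst odd_der_decomposition[OF two]) (simp add: Dw_zero)
  then show "d \<in> range eta_map" by blast
qed (auto intro: eta_map_Der1)

lemma Der1_W_component:
  assumes two: "(2::'f) \<noteq> 0"
  shows "Der1 emb \<delta> (deg (W i)) = range (Dw \<delta> i)"
proof (intro subset_antisym subsetI)
  fix d assume d: "d \<in> Der1 emb \<delta> (deg (W i))"
  then interpret cheng_kac_odd_der emb \<delta> d by unfold_locales (simp add: Der1_def)
  have x: "d (mon 1 X0) One = 0" and xj: "j \<noteq> i \<Longrightarrow> d (mon 1 (Xi j)) One = 0" for j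
    using Der1_vanish[OF d] by (cases i; cases j; simp add: gadd_def)+
  have "\<exists>g. d = Dw \<delta> i g"
    using odd_der_decomposition[OF two]
    by (cases i) (rule exI, simp add: x xj eta_map_zero Dw_zero)+
  then show "d \<in> range (Dw \<delta> i)" by blast
qed (auto intro: Dw_Der1)

lemma eta_map_comb: "(\<lambda>a e. \<Sum>k<(n::nat). emb (c k) * eta_map (r k) a e) = eta_map (\<Sum>k<n. emb (c k) * r k)"
  by (rule ext, rule jel_eqI) (simp_all add: eta_map_def sum_distrib_right sum_distrib_left sum_negf mult_ac)

lemma Dw_comb: "(\<lambda>a e. \<Sum>k<(n::nat). emb (c k) * Dw \<delta> i (r k) a e) = Dw \<delta> i (\<Sum>k<n. emb (c k) * r k)"
proof (intro ext)
  fix a e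
  have "(\<Sum>k<n. emb (c k) * Dw \<delta> i (r k) a e)
     = (\<Sum>k<n. emb (c k) * r k) * Dw \<delta> i 1 a e + (\<Sum>k<n. emb (c k) * \<delta> (r k)) * (if e = W i then a X0 else 0)"
    by (subst Dw_param) (simp add: distrib_left sum_distrib_right sum_distrib_left sum.distrib mult_ac)
  also have "\<dots> = Dw \<delta> i (\<Sum>k<n. emb (c k) * r k) a e"
    by (subst (2) Dw_param) (simp add: delta_sum)
  finally show "(\<Sum>k<n. emb (c k) * Dw \<delta> i (r k) a e) = Dw \<delta> i (\<Sum>k<n. emb (c k) * r k) a e" .
qed

lemma fspan_range:
  assumes comb: "\<And>n c r. (\<lambda>a e. \<Sum>k<(n::nat). emb (c k) * P (r k) a e) \<in> range P"
    and S: "S \<subseteq> range P"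
  shows "fspan emb S \<subseteq> range P"
proof
  fix d assume "d \<in> fspan emb S"
  then obtain n :: nat and c s where s: "\<forall>k<n. s k \<in> S" and d: "d = (\<lambda>a e. \<Sum>k<n. emb (c k) * s k a e)"
    unfolding fspan_def by blast
  have "\<forall>k<n. \<exists>x. s k = P x" using s S by blast
  then obtain r where r: "\<forall>k<n. s k = P (r k)" by metis
  have "d = (\<lambda>a e. \<Sum>k<n. emb (c k) * P (r k) a e)" unfolding d using r by simp
  then show "d \<in> range P" using comb by simp
qed

lemma fspan_single: "s \<in> S \<Longrightarrow> s \<in> fspan emb S"
proof -
  assume s: "s \<in> S"
  have "emb 1 = 1" using emb unfolding alg_emb_def by auto
  then show ?thesis unfolding fspan_def
    by (intro CollectI exI[of _ 1] exI[of _ "\<lambda>_. 1"] exI[of _ "\<lambda>_. s"]) (simp add: s)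
qed

text \<open>span D(Z, Zx) = {eta_a}: the parameters g delta(f) span Z by the hypothesis Z delta(Z) = Z.\<close>

lemma fspan_Dop_scalar_x:
  assumes Zd: "Z_delta_Z emb \<delta>"
  shows "fspan emb {Dop \<delta> False True (mon f One) (mon g X0) | f g. True} = range eta_map"
proof
  show "fspan emb {Dop \<delta> False True (mon f One) (mon g X0) | f g. True} \<subseteq> range eta_map"
    by (rule fspan_range) (auto simp: eta_map_comb Dop_scalar_x)
  show "range eta_map \<subseteq> fspan emb {Dop \<delta> False True (mon f One) (mon g X0) | f g. True}"
  proof
    fix d :: "'z jel \<Rightarrow> 'z jel" assume "d \<in> range eta_map"
    then obtain r where dr: "d = eta_map r" by blast
    obtain n :: nat and c f g where r: "r = (\<Sum>k<n. emb (c k) * (f k * \<delta> (g k)))"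
      using Zd unfolding Z_delta_Z_def by blast
    have "d = (\<lambda>a e. \<Sum>k<n. emb (c k) * Dop \<delta> False True (mon (g k) One) (mon (f k) X0) a e)"
      by (simp add: Dop_scalar_x eta_map_comb dr r)
    then show "d \<in> fspan emb {Dop \<delta> False True (mon f One) (mon g X0) | f g. True}"
      unfolding fspan_def
      by (intro CollectI exI[of _ n] exI[of _ c]
          exI[of _ "\<lambda>k. Dop \<delta> False True (mon (g k) One) (mon (f k) X0)"]) blast
  qed
qed

text \<open>span D(w_i, Zx) = {D(w_i, g x)}, since D(w_i, g x) is F-linear in g.\<close>

lemma fspan_Dop_w_x: "fspan emb {Dop \<delta> False True (mon 1 (W i)) (mon g X0) | g. True} = range (Dw \<delta> i)"
proof
  show "fspan emb {Dop \<delta> False True (mon 1 (W i)) (mon g X0) | g. True} \<subseteq> range (Dw \<delta> i)"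
    by (rule fspan_range) (auto simp: Dw_comb Dop_w_x)
  show "range (Dw \<delta> i) \<subseteq> fspan emb {Dop \<delta> False True (mon 1 (W i)) (mon g X0) | g. True}"
    by (auto intro!: fspan_single simp: Dop_w_x)
qed

text \<open>eta~_a is well defined and equals eta_map a, by the uniqueness lemma odd_der_eqI.\<close>

lemma eta_tilde_eq: "eta_tilde emb \<delta> r = eta_map r"
  unfolding eta_tilde_def
proof (rule the_equality)
  show "odd_der emb \<delta> (eta_map r) \<and> (\<forall>f. eta_map r (mon f One) = mon 0 One)
      \<and> eta_map r (mon 1 X0) = mon r One \<and> (\<forall>j. eta_map r (mon 1 (Xi j)) = mon 0 One)"
    by (intro conjI allI eta_map_odd_der ext) (simp_all add: eta_map_def mon_def split: cb.split)
next
  fix d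
  assume h: "odd_der emb \<delta> d \<and> (\<forall>f. d (mon f One) = mon 0 One) \<and> d (mon 1 X0) = mon r One
      \<and> (\<forall>j. d (mon 1 (Xi j)) = mon 0 One)"
  show "d = eta_map r"
    by (rule odd_der_eqI) (use h eta_map_odd_der in \<open>auto simp: eta_map_def mon_def split: cb.split\<close>)
qed

text \<open>Der(J)_1 is the direct sum of its four homogeneous components: the parameters of the
  summands are recovered from the coordinates d(x)_1 and d(x_i)_1.\<close>

lemma Der1_direct_sum:
  assumes two: "(2::'f) \<noteq> 0" and d: "odd_der emb \<delta> d"
  shows "\<exists>!(d1, d2, d3, d4). d1 \<in> Der1 emb \<delta> (False, False) \<and> d2 \<in> Der1 emb \<delta> (True, False) \<and>
           d3 \<in> Der1 emb \<delta> (False, True) \<and> d4 \<in> Der1 emb \<delta> (True, True) \<and>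
           d = (\<lambda>a e. d1 a e + d2 a e + d3 a e + d4 a e)"
proof -
  interpret cheng_kac_odd_der emb \<delta> d by unfold_locales (rule d)
  note components = Der1_zero_component[OF two] Der1_W_component[OF two, of I1, simplified]
    Der1_W_component[OF two, of I2, simplified] Der1_W_component[OF two, of I3, simplified]
  show ?thesis
  proof (rule ex1I[of _ "(eta_map (d (mon 1 X0) One), Dw \<delta> I1 (- d (mon 1 (Xi I1)) One),
                          Dw \<delta> I2 (- d (mon 1 (Xi I2)) One), Dw \<delta> I3 (d (mon 1 (Xi I3)) One))"], goal_cases)
    case 1
    show ?case unfolding prod.case components using odd_der_decomposition[OF two] by blast
  next
    case (2 y)
    then obtain a g1 g2 g3 where y: "y = (eta_map a, Dw \<delta> I1 g1, Dw \<delta> I2 g2, Dw \<delta> I3 g3)"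
      and sum: "d = (\<lambda>c e. eta_map a c e + Dw \<delta> I1 g1 c e + Dw \<delta> I2 g2 c e + Dw \<delta> I3 g3 c e)"
      by (auto simp: components)
    have "d (mon 1 X0) One = a" "d (mon 1 (Xi I1)) One = - g1"
      "d (mon 1 (Xi I2)) One = - g2" "d (mon 1 (Xi I3)) One = g3"
      by (simp_all add: sum eta_map_def mon_apply)
    then show ?case by (simp add: y)
  qed
qed

end

theorem proposition4p3:
  fixes emb :: "'f::field \<Rightarrow> 'z::comm_ring_1" and \<delta> :: "'z \<Rightarrow> 'z"
  assumes "(2::'f) \<noteq> 0"
    and "alg_emb emb"
    and "is_derivation emb \<delta>"
    and "Z_delta_Z emb \<delta>"
  shows "Der1 emb \<delta> (False, False) = fspan emb {Dop \<delta> False True (mon f One) (mon g X0) | f g. True}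
    \<and> fspan emb {Dop \<delta> False True (mon f One) (mon g X0) | f g. True} = range (eta_tilde emb \<delta>)
    \<and> Der1 emb \<delta> (True, False) = fspan emb {Dop \<delta> False True (mon 1 (W I1)) (mon g X0) | g. True}
    \<and> Der1 emb \<delta> (False, True) = fspan emb {Dop \<delta> False True (mon 1 (W I2)) (mon g X0) | g. True}
    \<and> Der1 emb \<delta> (True, True) = fspan emb {Dop \<delta> False True (mon 1 (W I3)) (mon g X0) | g. True}
    \<and> (\<forall>d. odd_der emb \<delta> d \<longrightarrow>
         (\<exists>!(d1, d2, d3, d4).
            d1 \<in> Der1 emb \<delta> (False, False) \<and> d2 \<in> Der1 emb \<delta> (True, False) \<and>
            d3 \<in> Der1 emb \<delta> (False, True) \<and> d4 \<in> Der1 emb \<delta> (True, True) \<and>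
            d = (\<lambda>a e. d1 a e + d2 a e + d3 a e + d4 a e)))"
proof -
  interpret cheng_kac emb \<delta> using assms(2,3) by unfold_locales
  have "eta_tilde emb \<delta> = eta_map" by (rule ext) (rule eta_tilde_eq)
  then show ?thesis
    using Der1_zero_component[OF assms(1)] fspan_Dop_scalar_x[OF assms(4)]
      Der1_W_component[OF assms(1), of I1] Der1_W_component[OF assms(1), of I2]
      Der1_W_component[OF assms(1), of I3] fspan_Dop_w_x Der1_direct_sum[OF assms(1)]
    by simp
qed

end
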